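(* Let $X=(X_1,\dots,X_k)$ be a random vector with copula $C$ and marginal distribution functions $F_1,\dots,F_k$. Let $Z_1$ be a random variable independent of $X$ with distribution function $G$, let $Z=(Z_1,\dots,Z_1)\in\mathbb{R}^k$, and let $\tilde F_i$ be the distribution function of $X_i+Z_1$. Then the copula of $X+Z$ is $$C_4(u)=\int_{-\infty}^{\infty}C\big(F_1(\tilde F_1^{-1}(u_1)-t),\dots,F_k(\tilde F_k^{-1}(u_k)-t)\big)\,dG(t),$$ for $u=(u_1,\dots,u_k)\in[0,1]^k$.
   Context: A $k$-copula is a $k$-variate distribution function on $[0,1]^k$ with uniform marginals; the copula of a random vector is the copula given by Sklar's theorem. $\tilde F_i^{-1}$ denotes the inverse (quantile function) of $\tilde F_i$.
   Formalization: Each distribution function $\tilde F_i$ of $X_i+Z_1$ is assumed continuous, a hypothesis on which the copula formula $C_4$ is stated to hold. The statement above fails without it. *)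

theory Defs
  imports "HOL-Probability.Probability"
begin

definition unit_cube :: "(real ^ 'k) set" where
  "unit_cube = {u. \<forall>i. 0 \<le> u $ i \<and> u $ i \<le> 1}"

definition is_copula :: "(real ^ 'k \<Rightarrow> real) \<Rightarrow> bool" where
  "is_copula C \<longleftrightarrow> (\<exists>\<mu>. prob_space \<mu> \<and> sets \<mu> = sets (borel :: (real ^ 'k) measure) \<and>
      (\<forall>i. \<forall>a. 0 \<le> a \<and> a \<le> 1 \<longrightarrow> measure \<mu> {v. v $ i \<le> a} = a) \<and>
      (\<forall>u \<in> unit_cube. C u = measure \<mu> {v. \<forall>i. v $ i \<le> u $ i}))"

definition copula_of :: "'a measure \<Rightarrow> ('a \<Rightarrow> real ^ 'k) \<Rightarrow> (real ^ 'k \<Rightarrow> real) \<Rightarrow> bool" where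
  "copula_of M Y C \<longleftrightarrow> is_copula C \<and>
     (\<forall>x. measure M {\<omega> \<in> space M. \<forall>i. Y \<omega> $ i \<le> x $ i} =
          C (\<chi> i. measure M {\<omega> \<in> space M. Y \<omega> $ i \<le> x $ i}))"

text \<open>Quantile function (generalized inverse) F^{-1}(u) = inf {x. F x \<ge> u},
  valued in the extended reals (so F^{-1}(0) = -\<infinity>, and F^{-1}(u) = \<infinity> if F never reaches u).\<close>
definition quantile :: "(real \<Rightarrow> real) \<Rightarrow> real \<Rightarrow> ereal" where
  "quantile F u = Inf {ereal x | x. u \<le> F x}"

definition cdf_ext :: "(real \<Rightarrow> real) \<Rightarrow> ereal \<Rightarrow> real" where
  "cdf_ext F x = (if x = -\<infinity> then 0 else if x = \<infinity> then 1 else F (real_of_ereal x))"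

end

(* Write W = X + Z. Its marginals Ft_i are continuous, so each Ft_i(W_i) is uniform on [0,1]
   (probability integral transform) and almost surely Ft_i(W_i) <= u iff W_i <= Ft_i^{-1}(u);
   hence the copula of W is u |-> P(W_i <= Ft_i^{-1}(u_i) for all i). As Z_1 is independent of X,
   the joint law of (Z_1, X) is the product of the laws, and Fubini turns this probability into
   the integral, over t with respect to dG, of P(X_i <= Ft_i^{-1}(u_i) - t for all i), which is
   C(F_1(Ft_1^{-1}(u_1) - t), ...) by Sklar's relation for X. The quantiles may be infinite, so
   that relation is first extended to extended-real arguments, approximating them by real ones
   and using that C is Lipschitz. *)

theory Submission
  imports Defs
begin

lemma borel_measurable_vec_nth[measurable (raw)]:
  fixes f :: "'a \<Rightarrow> real ^ 'k"
  shows "f \<in> borel_measurable M \<Longrightarrow> (\<lambda>x. f x $ i) \<in> borel_measurable M"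
  by (rule measurable_compose[OF _ borel_measurable_nth])

lemma borel_measurable_vec_lambda:
  fixes f :: "'a \<Rightarrow> 'k::finite \<Rightarrow> real"
  assumes "\<And>i. (\<lambda>x. f x i) \<in> borel_measurable M"
  shows "(\<lambda>x. \<chi> i. f x i) \<in> borel_measurable M"
  by (subst borel_measurable_euclidean_space) (auto simp: Basis_vec_def inner_axis assms)

lemma cdf_distr:
  assumes "V \<in> borel_measurable M"
  shows "cdf (distr M borel V) x = measure M {\<omega> \<in> space M. V \<omega> \<le> x}"
proof -
  have "V -` {..x} \<inter> space M = {\<omega> \<in> space M. V \<omega> \<le> x}" by auto
  then show ?thesis using assms by (simp add: cdf_def measure_distr)
qed

lemma (in prob_space) distr_eq_interval_measure:
  assumes "V \<in> borel_measurable M" and "\<And>x. G x = prob {\<omega> \<in> space M. V \<omega> \<le> x}"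
  shows "distr M borel V = interval_measure G"
proof -
  interpret D: real_distribution "distr M borel V" using assms(1) by simp
  have G: "G = cdf (distr M borel V)" using assms by (simp add: fun_eq_iff cdf_distr)
  have "real_distribution (interval_measure G)"
    unfolding G by (intro real_distribution_interval_measure D.cdf_nondecreasing
        D.cdf_is_right_cont D.cdf_lim_at_bot D.cdf_lim_at_top_prob)
  moreover have "cdf (interval_measure G) = G"
    unfolding G by (intro cdf_interval_measure D.cdf_nondecreasing D.cdf_is_right_cont D.cdf_lim_at_bot)
  ultimately show ?thesis using cdf_unique[OF D.real_distribution_axioms] G by simp
qed

lemma (in finite_measure) AE_iff_of_subset_measure_eq:
  assumes "{x \<in> space M. P x} \<in> sets M" and "{x \<in> space M. Q x} \<in> sets M"
    and "\<And>x. x \<in> space M \<Longrightarrow> P x \<Longrightarrow> Q x"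
    and "measure M {x \<in> space M. P x} = measure M {x \<in> space M. Q x}"
  shows "AE x in M. P x \<longleftrightarrow> Q x"
proof (rule AE_I')
  let ?N = "{x \<in> space M. Q x} - {x \<in> space M. P x}"
  have "measure M ?N = 0"
    using assms by (subst finite_measure_Diff) auto
  then show "?N \<in> null_sets M"
    using assms(1,2) by (simp add: null_sets_def emeasure_eq_measure)
  show "{x \<in> space M. \<not> (P x \<longleftrightarrow> Q x)} \<subseteq> ?N" using assms(3) by auto
qed

lemma measure_Collect_all_cong_AE:
  fixes P Q :: "'i :: finite \<Rightarrow> 'a \<Rightarrow> bool"
  assumes "\<And>i. AE \<omega> in M. P i \<omega> \<longleftrightarrow> Q i \<omega>"
    and "{\<omega> \<in> space M. \<forall>i. P i \<omega>} \<in> sets M" and "{\<omega> \<in> space M. \<forall>i. Q i \<omega>} \<in> sets M"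
  shows "measure M {\<omega> \<in> space M. \<forall>i. P i \<omega>} = measure M {\<omega> \<in> space M. \<forall>i. Q i \<omega>}"
proof (rule measure_eq_AE)
  have "AE \<omega> in M. \<forall>i\<in>UNIV. P i \<omega> \<longleftrightarrow> Q i \<omega>"
    using assms(1) by (intro AE_finite_allI) auto
  then show "AE \<omega> in M. \<omega> \<in> {\<omega> \<in> space M. \<forall>i. P i \<omega>} \<longleftrightarrow> \<omega> \<in> {\<omega> \<in> space M. \<forall>i. Q i \<omega>}"
    by eventually_elim auto
qed (use assms in auto)

lemma quantile_eq_Inf: "quantile F u = Inf (ereal ` {x. u \<le> F x})"
  unfolding quantile_def by (rule arg_cong[where f = Inf]) auto

locale continuous_distribution_function =
  fixes H :: "real \<Rightarrow> real"
  assumes mono: "mono H" and isCont: "\<And>x. isCont H x"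
    and tendsto_at_bot: "(H \<longlongrightarrow> 0) at_bot" and tendsto_at_top: "(H \<longlongrightarrow> 1) at_top"
begin

lemma nonneg: "0 \<le> H x"
proof (rule tendsto_upperbound[OF tendsto_at_bot])
  show "\<forall>\<^sub>F y in at_bot. H y \<le> H x"
    unfolding eventually_at_bot_linorder by (auto intro: monoD[OF mono])
qed simp

lemma le_1: "H x \<le> 1"
proof (rule tendsto_lowerbound[OF tendsto_at_top])
  show "\<forall>\<^sub>F y in at_top. H x \<le> H y"
    unfolding eventually_at_top_linorder by (auto intro: monoD[OF mono])
qed simp

lemma closed_Collect_cdf_le: "closed {x. H x \<le> u}"
  and closed_Collect_cdf_ge: "closed {x. u \<le> H x}"
  using isCont by (auto intro!: closed_Collect_le continuous_at_imp_continuous_on continuous_on_const)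

lemma le_cdf_ext: "ereal x \<le> y \<Longrightarrow> H x \<le> cdf_ext H y"
  by (cases y) (auto simp: cdf_ext_def le_1 monoD[OF mono])

lemma cdf_Inf_Collect_ge:
  assumes "{x. u \<le> H x} \<noteq> {}" and "bdd_below {x. u \<le> H x}"
  shows "H (Inf {x. u \<le> H x}) = u"
proof (rule antisym)
  let ?q = "Inf {x. u \<le> H x}"
  show "u \<le> H ?q" using closed_contains_Inf[OF assms closed_Collect_cdf_ge] by simp
  show "H ?q \<le> u"
  proof (rule tendsto_upperbound)
    show "(H \<longlongrightarrow> H ?q) (at_left ?q)"
      using isCont[of ?q] by (simp add: isCont_def filterlim_at_split)
    have "H x \<le> u" if "x < ?q" for x
    proof (rule ccontr)
      assume "\<not> H x \<le> u"
      then have "?q \<le> x" using assms(2) by (intro cInf_lower) auto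
      with that show False by simp
    qed
    then show "\<forall>\<^sub>F x in at_left ?q. H x \<le> u"
      by (intro eventually_at_leftI[of "?q - 1"]) auto
  qed simp
qed

lemma cdf_ext_quantile:
  assumes "0 \<le> u" "u \<le> 1"
  shows "cdf_ext H (quantile H u) = u"
proof -
  let ?T = "{x. u \<le> H x}"
  consider (empty) "?T = {}" | (bdd) "?T \<noteq> {}" "bdd_below ?T" | (unbdd) "\<not> bdd_below ?T"
    by metis
  then show ?thesis
  proof cases
    case empty
    have "1 \<le> u"
    proof (rule tendsto_upperbound[OF tendsto_at_top])
      show "\<forall>\<^sub>F x in at_top. H x \<le> u" using empty by (auto simp: not_le less_imp_le)
    qed simp
    moreover have "quantile H u = \<infinity>" unfolding quantile_eq_Inf empty by (simp add: top_ereal_def)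
    ultimately show ?thesis using assms by (simp add: cdf_ext_def)
  next
    case bdd
    then have "quantile H u = ereal (Inf ?T)" using ereal_Inf' by (simp add: quantile_eq_Inf)
    then show ?thesis using cdf_Inf_Collect_ge[OF bdd] by (simp add: cdf_ext_def)
  next
    case unbdd
    have u_le: "u \<le> H x" for x
    proof -
      obtain y where "u \<le> H y" "y \<le> x"
        using unbdd unfolding bdd_below_def by (auto simp: not_le intro: less_imp_le)
      then show ?thesis using monoD[OF mono] order_trans by blast
    qed
    then have "quantile H u = -\<infinity>" unfolding quantile_eq_Inf by (intro ereal_bot Inf_lower) auto
    moreover have "u \<le> 0" using u_le by (intro tendsto_lowerbound[OF tendsto_at_bot]) auto
    ultimately show ?thesis using assms by (simp add: cdf_ext_def)
  qed
qed

lemma bdd_above_Collect_le: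
  assumes "u < 1"
  shows "bdd_above {x. H x \<le> u}"
proof -
  obtain b where b: "\<And>x. b \<le> x \<Longrightarrow> u < H x"
    using order_tendstoD(1)[OF tendsto_at_top assms] by (auto simp: eventually_at_top_linorder)
  show ?thesis
  proof (rule bdd_aboveI)
    show "x \<le> b" if "x \<in> {x. H x \<le> u}" for x
      using that b[of x] by fastforce
  qed
qed

end

locale real_rv_continuous_cdf = prob_space M for M :: "'a measure" +
  fixes W :: "'a \<Rightarrow> real" and H :: "real \<Rightarrow> real"
  assumes measurable_W[measurable]: "W \<in> borel_measurable M"
    and cdf_eq_prob: "\<And>x. H x = prob {\<omega> \<in> space M. W \<omega> \<le> x}"
    and isCont_cdf: "\<And>x. isCont H x"
begin

sublocale continuous_distribution_function H
proof -
  interpret D: real_distribution "distr M borel W" by simp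
  have "H = cdf (distr M borel W)" by (simp add: fun_eq_iff cdf_distr cdf_eq_prob)
  then show "continuous_distribution_function H"
    using D.cdf_nondecreasing D.cdf_lim_at_bot D.cdf_lim_at_top_prob isCont_cdf
    by unfold_locales (auto intro: monoI)
qed

lemma measurable_cdf[measurable]: "H \<in> borel_measurable borel"
  by (intro borel_measurable_continuous_onI continuous_at_imp_continuous_on ballI isCont_cdf)

lemma prob_le_ereal: "prob {\<omega> \<in> space M. ereal (W \<omega>) \<le> y} = cdf_ext H y"
  by (cases y) (simp_all add: cdf_ext_def cdf_eq_prob prob_space)

lemma prob_cdf_le_le:
  assumes "0 \<le> u"
  shows "prob {\<omega> \<in> space M. H (W \<omega>) \<le> u} \<le> u"
proof (cases "u < 1 \<and> {x. H x \<le> u} \<noteq> {}")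
  case True
  let ?s = "Sup {x. H x \<le> u}"
  have bdd: "bdd_above {x. H x \<le> u}" using True by (simp add: bdd_above_Collect_le)
  have "{\<omega> \<in> space M. H (W \<omega>) \<le> u} \<subseteq> {\<omega> \<in> space M. W \<omega> \<le> ?s}"
    using cSup_upper[OF _ bdd] by auto
  then have "prob {\<omega> \<in> space M. H (W \<omega>) \<le> u} \<le> H ?s"
    unfolding cdf_eq_prob by (intro finite_measure_mono) measurable
  also have "H ?s \<le> u"
    using closed_contains_Sup[OF _ bdd closed_Collect_cdf_le] True by simp
  finally show ?thesis .
next
  case False
  then consider "1 \<le> u" | "{\<omega> \<in> space M. H (W \<omega>) \<le> u} = {}" by fastforce
  then show ?thesis
  proof cases
    case 1
    then show ?thesis using prob_le_1 order_trans by blast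
  next
    case 2
    then show ?thesis using assms by (simp only: measure_empty)
  qed
qed

lemma prob_cdf_le:
  assumes "0 \<le> u" "u \<le> 1"
  shows "prob {\<omega> \<in> space M. H (W \<omega>) \<le> u} = u"
proof (rule antisym)
  have "{\<omega> \<in> space M. ereal (W \<omega>) \<le> quantile H u} \<subseteq> {\<omega> \<in> space M. H (W \<omega>) \<le> u}"
    using le_cdf_ext cdf_ext_quantile[OF assms] by fastforce
  then have "prob {\<omega> \<in> space M. ereal (W \<omega>) \<le> quantile H u} \<le> prob {\<omega> \<in> space M. H (W \<omega>) \<le> u}"
    by (intro finite_measure_mono) measurable
  then show "u \<le> prob {\<omega> \<in> space M. H (W \<omega>) \<le> u}"
    by (simp add: prob_le_ereal cdf_ext_quantile assms)
qed (rule prob_cdf_le_le[OF assms(1)])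

lemma AE_le_quantile_iff_cdf_le:
  assumes "0 \<le> u" "u \<le> 1"
  shows "AE \<omega> in M. ereal (W \<omega>) \<le> quantile H u \<longleftrightarrow> H (W \<omega>) \<le> u"
proof (rule AE_iff_of_subset_measure_eq)
  show "H (W \<omega>) \<le> u" if "ereal (W \<omega>) \<le> quantile H u" for \<omega>
    using le_cdf_ext[OF that] by (simp add: cdf_ext_quantile assms)
qed (simp_all add: prob_le_ereal prob_cdf_le cdf_ext_quantile assms)

lemma AE_le_iff_cdf_le: "AE \<omega> in M. W \<omega> \<le> x \<longleftrightarrow> H (W \<omega>) \<le> H x"
proof (rule AE_iff_of_subset_measure_eq)
  show "prob {\<omega> \<in> space M. W \<omega> \<le> x} = prob {\<omega> \<in> space M. H (W \<omega>) \<le> H x}"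
    using prob_cdf_le[OF nonneg le_1] cdf_eq_prob by simp
qed (auto intro: monoD[OF mono])

end

lemma copula_diff_le:
  fixes C :: "real ^ 'k \<Rightarrow> real"
  assumes "is_copula C" "u \<in> unit_cube" "v \<in> unit_cube"
  shows "C u - C v \<le> (\<Sum>i\<in>UNIV. \<bar>u $ i - v $ i\<bar>)"
proof -
  obtain \<mu> :: "(real ^ 'k) measure" where "prob_space \<mu>" and sets_\<mu>: "sets \<mu> = sets borel"
    and marginal: "\<And>i a. 0 \<le> a \<Longrightarrow> a \<le> 1 \<Longrightarrow> measure \<mu> {w. w $ i \<le> a} = a"
    and C: "\<And>u. u \<in> unit_cube \<Longrightarrow> C u = measure \<mu> {w. \<forall>i. w $ i \<le> u $ i}"
    using assms(1) unfolding is_copula_def by blast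
  interpret prob_space \<mu> by fact
  note [measurable_cong] = sets_\<mu>
  let ?D = "\<lambda>i. {w. v $ i < w $ i \<and> w $ i \<le> u $ i}"
  have D: "prob (?D i) \<le> \<bar>u $ i - v $ i\<bar>" for i
  proof (cases "u $ i \<le> v $ i")
    case False
    have "?D i = {w. w $ i \<le> u $ i} - {w. w $ i \<le> v $ i}" by auto
    then have "prob (?D i) = prob {w. w $ i \<le> u $ i} - prob {w. w $ i \<le> v $ i}"
      using False by (simp add: finite_measure_Diff subset_eq)
    also have "\<dots> = u $ i - v $ i"
      using assms(2,3) by (simp add: marginal unit_cube_def)
    finally show ?thesis by simp
  next
    case True
    then have "?D i = {}" by auto
    then show ?thesis by (simp only: measure_empty abs_ge_zero)
  qed
  have "{w. \<forall>i. w $ i \<le> u $ i} \<subseteq> {w. \<forall>i. w $ i \<le> v $ i} \<union> (\<Union>i. ?D i)"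
    by (auto simp: not_le)
  then have "C u \<le> prob ({w. \<forall>i. w $ i \<le> v $ i} \<union> (\<Union>i. ?D i))"
    unfolding C[OF assms(2)] by (intro finite_measure_mono) measurable
  also have "\<dots> \<le> C v + prob (\<Union>i. ?D i)"
    unfolding C[OF assms(3)] by (intro measure_Un_le) measurable
  also have "prob (\<Union>i. ?D i) \<le> (\<Sum>i\<in>UNIV. prob (?D i))"
    by (intro finite_measure_subadditive_finite) auto
  also have "\<dots> \<le> (\<Sum>i\<in>UNIV. \<bar>u $ i - v $ i\<bar>)"
    by (intro sum_mono D)
  finally show ?thesis by simp
qed

lemma copula_lipschitz:
  fixes C :: "real ^ 'k \<Rightarrow> real"
  assumes "is_copula C" "u \<in> unit_cube" "v \<in> unit_cube"
  shows "\<bar>C u - C v\<bar> \<le> (\<Sum>i\<in>UNIV. \<bar>u $ i - v $ i\<bar>)"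
  using copula_diff_le[OF assms] copula_diff_le[OF assms(1,3,2)] by (simp add: abs_minus_commute)

lemma copula_tendsto:
  fixes C :: "real ^ 'k \<Rightarrow> real"
  assumes "is_copula C" "\<And>n. a n \<in> unit_cube" "b \<in> unit_cube"
    and "\<And>i. (\<lambda>n. a n $ i) \<longlonglongrightarrow> b $ i"
  shows "(\<lambda>n. C (a n)) \<longlonglongrightarrow> C b"
proof -
  have "(\<lambda>n. C (a n) - C b) \<longlonglongrightarrow> 0"
  proof (rule Lim_null_comparison)
    show "\<forall>\<^sub>F n in sequentially. norm (C (a n) - C b) \<le> (\<Sum>i\<in>UNIV. \<bar>a n $ i - b $ i\<bar>)"
      using copula_lipschitz[OF assms(1-3)] by simp
    have "(\<lambda>n. \<Sum>i\<in>UNIV. \<bar>a n $ i - b $ i\<bar>) \<longlonglongrightarrow> (\<Sum>i\<in>UNIV. \<bar>b $ i - b $ i\<bar>)"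
      by (intro tendsto_sum tendsto_rabs tendsto_diff assms(4) tendsto_const)
    then show "(\<lambda>n. \<Sum>i\<in>UNIV. \<bar>a n $ i - b $ i\<bar>) \<longlonglongrightarrow> 0" by simp
  qed
  then show ?thesis by (rule LIM_zero_cancel)
qed

lemma is_copula_of_uniform_marginals:
  fixes V :: "'a \<Rightarrow> real ^ 'k"
  assumes "prob_space M" and V[measurable]: "V \<in> borel_measurable M"
    and marginal: "\<And>i a. 0 \<le> a \<Longrightarrow> a \<le> 1 \<Longrightarrow> measure M {\<omega> \<in> space M. V \<omega> $ i \<le> a} = a"
    and C: "\<And>u. u \<in> unit_cube \<Longrightarrow> C u = measure M {\<omega> \<in> space M. \<forall>i. V \<omega> $ i \<le> u $ i}"
  shows "is_copula C"
  unfolding is_copula_def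
proof (intro exI conjI allI impI ballI)
  let ?\<mu> = "distr M borel V"
  show "prob_space ?\<mu>" using assms(1) by (simp add: prob_space.prob_space_distr)
  show "sets ?\<mu> = sets borel" by simp
  have \<mu>: "measure ?\<mu> A = measure M {\<omega> \<in> space M. V \<omega> \<in> A}" if "A \<in> sets borel" for A
    using measure_distr[OF V that] by (simp add: vimage_def Int_def conj_commute)
  show "measure ?\<mu> {v. v $ i \<le> a} = a" if "0 \<le> a \<and> a \<le> 1" for i a
    using that by (subst \<mu>) (simp_all add: marginal)
  show "C u = measure ?\<mu> {v. \<forall>i. v $ i \<le> u $ i}" if "u \<in> unit_cube" for u
    using that by (subst \<mu>) (simp_all add: C)
qed

lemma copula_of_continuous_marginals:
  fixes W :: "'a \<Rightarrow> real ^ 'k" and F :: "'k \<Rightarrow> real \<Rightarrow> real"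
  assumes "prob_space M" and W[measurable]: "W \<in> borel_measurable M"
    and F: "\<And>i x. F i x = measure M {\<omega> \<in> space M. W \<omega> $ i \<le> x}" and "\<And>i x. isCont (F i) x"
  shows "copula_of M W (\<lambda>u. measure M {\<omega> \<in> space M. \<forall>i. ereal (W \<omega> $ i) \<le> quantile (F i) (u $ i)})"
    (is "copula_of M W ?C")
proof -
  interpret prob_space M by fact
  have rv: "real_rv_continuous_cdf M (\<lambda>\<omega>. W \<omega> $ i) (F i)" for i
  proof (intro real_rv_continuous_cdf.intro real_rv_continuous_cdf_axioms.intro)
    show "(\<lambda>\<omega>. W \<omega> $ i) \<in> borel_measurable M" by measurable
  qed (use assms in auto)
  note [measurable] = real_rv_continuous_cdf.measurable_cdf[OF rv]
  have C_cube: "?C u = measure M {\<omega> \<in> space M. \<forall>i. F i (W \<omega> $ i) \<le> u $ i}" if "u \<in> unit_cube" for u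
    using that unfolding unit_cube_def
    by (intro measure_Collect_all_cong_AE real_rv_continuous_cdf.AE_le_quantile_iff_cdf_le[OF rv]) auto
  have "is_copula ?C"
  proof (rule is_copula_of_uniform_marginals[where V = "\<lambda>\<omega>. \<chi> i. F i (W \<omega> $ i)"])
    show "(\<lambda>\<omega>. \<chi> i. F i (W \<omega> $ i)) \<in> borel_measurable M"
      by (intro borel_measurable_vec_lambda) measurable
  qed (simp_all add: assms(1) C_cube real_rv_continuous_cdf.prob_cdf_le[OF rv])
  moreover have "measure M {\<omega> \<in> space M. \<forall>i. W \<omega> $ i \<le> x $ i} =
      ?C (\<chi> i. measure M {\<omega> \<in> space M. W \<omega> $ i \<le> x $ i})" for x
  proof -
    have "measure M {\<omega> \<in> space M. \<forall>i. W \<omega> $ i \<le> x $ i} =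
        measure M {\<omega> \<in> space M. \<forall>i. F i (W \<omega> $ i) \<le> F i (x $ i)}"
      by (intro measure_Collect_all_cong_AE real_rv_continuous_cdf.AE_le_iff_cdf_le[OF rv]) auto
    also have "\<dots> = ?C (\<chi> i. F i (x $ i))"
    proof -
      have "(\<chi> i. F i (x $ i)) \<in> unit_cube" by (simp add: unit_cube_def F)
      from C_cube[OF this] show ?thesis by simp
    qed
    also have "(\<chi> i. F i (x $ i)) = (\<chi> i. measure M {\<omega> \<in> space M. W \<omega> $ i \<le> x $ i})"
      by (simp add: F)
    finally show ?thesis .
  qed
  ultimately show ?thesis unfolding copula_of_def by blast
qed

definition ereal_approx :: "nat \<Rightarrow> ereal \<Rightarrow> real" where
  "ereal_approx n y = (case y of ereal r \<Rightarrow> r | PInfty \<Rightarrow> real n | MInfty \<Rightarrow> - real n)"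

lemma eventually_le_ereal_approx: "\<forall>\<^sub>F n in sequentially. x \<le> ereal_approx n y \<longleftrightarrow> ereal x \<le> y"
proof (cases y)
  case PInf
  have "\<forall>\<^sub>F n in sequentially. x \<le> real n"
    using filterlim_real_sequentially by (simp add: filterlim_at_top)
  then show ?thesis using PInf by (simp add: ereal_approx_def)
next
  case MInf
  have "\<forall>\<^sub>F n in sequentially. - x < real n"
    using filterlim_real_sequentially by (simp add: filterlim_at_top_dense)
  then show ?thesis by eventually_elim (auto simp: ereal_approx_def MInf)
qed (simp add: ereal_approx_def)

lemma (in real_distribution) tendsto_cdf_ereal_approx:
  "(\<lambda>n. cdf M (ereal_approx n y)) \<longlonglongrightarrow> cdf_ext (cdf M) y"
  by (cases y) (simp_all add: ereal_approx_def cdf_ext_def cdf_lim_infty_prob cdf_lim_neg_infty)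

lemma (in finite_measure) tendsto_measure_of_eventually_mem:
  assumes "\<And>n. A n \<in> sets M" and "B \<in> sets M"
    and "\<And>x. x \<in> space M \<Longrightarrow> \<forall>\<^sub>F n in sequentially. x \<in> A n \<longleftrightarrow> x \<in> B"
  shows "(\<lambda>n. measure M (A n)) \<longlonglongrightarrow> measure M B"
proof -
  have "(\<lambda>n. \<integral>x. indicator (A n) x \<partial>M) \<longlonglongrightarrow> (\<integral>x. indicator B x \<partial>M :: real)"
  proof (rule integral_dominated_convergence[where w = "\<lambda>_. 1"])
    show "AE x in M. (\<lambda>n. indicator (A n) x) \<longlonglongrightarrow> (indicator B x :: real)"
    proof (rule AE_I2)
      fix x assume "x \<in> space M"
      from assms(3)[OF this] have "\<forall>\<^sub>F n in sequentially. indicator (A n) x = (indicator B x :: real)"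
        by eventually_elim (simp add: indicator_def)
      then show "(\<lambda>n. indicator (A n) x) \<longlonglongrightarrow> (indicator B x :: real)"
        by (rule tendsto_eventually)
    qed
  qed (use assms in \<open>auto simp: indicator_def\<close>)
  then show ?thesis using assms(1,2) by (simp add: Int_absorb2 sets.sets_into_space)
qed

lemma copula_of_ereal:
  fixes X :: "'a \<Rightarrow> real ^ 'k" and y :: "'k \<Rightarrow> ereal"
  assumes "prob_space M" and X[measurable]: "X \<in> borel_measurable M" and "copula_of M X C"
    and F: "\<And>i x. F i x = measure M {\<omega> \<in> space M. X \<omega> $ i \<le> x}"
  shows "measure M {\<omega> \<in> space M. \<forall>i. ereal (X \<omega> $ i) \<le> y i} = C (\<chi> i. cdf_ext (F i) (y i))"
proof -
  interpret prob_space M by fact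
  have C: "is_copula C"
    and C_eq: "\<And>x. prob {\<omega> \<in> space M. \<forall>i. X \<omega> $ i \<le> x $ i} =
        C (\<chi> i. prob {\<omega> \<in> space M. X \<omega> $ i \<le> x $ i})"
    using assms(3) unfolding copula_of_def by auto
  have F_cdf: "F i = cdf (distr M borel (\<lambda>\<omega>. X \<omega> $ i))" for i
  proof -
    have "(\<lambda>\<omega>. X \<omega> $ i) \<in> borel_measurable M" by measurable
    then show ?thesis by (simp add: fun_eq_iff F cdf_distr)
  qed
  let ?A = "\<lambda>n. {\<omega> \<in> space M. \<forall>i. X \<omega> $ i \<le> ereal_approx n (y i)}"
  have "(\<lambda>n. prob (?A n)) \<longlonglongrightarrow> prob {\<omega> \<in> space M. \<forall>i. ereal (X \<omega> $ i) \<le> y i}"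
  proof (rule tendsto_measure_of_eventually_mem)
    fix \<omega>
    have "\<forall>\<^sub>F n in sequentially. \<forall>i. X \<omega> $ i \<le> ereal_approx n (y i) \<longleftrightarrow> ereal (X \<omega> $ i) \<le> y i"
      by (intro eventually_all_finite eventually_le_ereal_approx)
    then show "\<forall>\<^sub>F n in sequentially. \<omega> \<in> ?A n \<longleftrightarrow> \<omega> \<in> {\<omega> \<in> space M. \<forall>i. ereal (X \<omega> $ i) \<le> y i}"
      by eventually_elim auto
  qed measurable
  moreover have "prob (?A n) = C (\<chi> i. F i (ereal_approx n (y i)))" for n
    using C_eq[of "\<chi> i. ereal_approx n (y i)"] by (simp add: F)
  moreover have "(\<lambda>n. C (\<chi> i. F i (ereal_approx n (y i)))) \<longlonglongrightarrow> C (\<chi> i. cdf_ext (F i) (y i))"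
  proof (rule copula_tendsto[OF C])
    show "(\<lambda>n. (\<chi> i. F i (ereal_approx n (y i))) $ i) \<longlonglongrightarrow> (\<chi> i. cdf_ext (F i) (y i)) $ i" for i
      unfolding F_cdf by (simp add: real_distribution.tendsto_cdf_ereal_approx)
  qed (simp_all add: unit_cube_def F cdf_ext_def)
  ultimately show ?thesis using LIMSEQ_unique by auto
qed

lemma (in prob_space) pair_measure_distr_eq_distr_pair:
  assumes X[measurable]: "X \<in> measurable M SX" and Z[measurable]: "Z \<in> measurable M SZ"
    and indep: "\<And>A B. A \<in> sets SX \<Longrightarrow> B \<in> sets SZ \<Longrightarrow>
      prob {\<omega> \<in> space M. X \<omega> \<in> A \<and> Z \<omega> \<in> B} =
      prob {\<omega> \<in> space M. X \<omega> \<in> A} * prob {\<omega> \<in> space M. Z \<omega> \<in> B}"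
  shows "distr M SZ Z \<Otimes>\<^sub>M distr M SX X = distr M (SZ \<Otimes>\<^sub>M SX) (\<lambda>\<omega>. (Z \<omega>, X \<omega>))"
proof (rule pair_measure_eqI)
  interpret PX: prob_space "distr M SX X" by (rule prob_space_distr) simp
  interpret PZ: prob_space "distr M SZ Z" by (rule prob_space_distr) simp
  show "sigma_finite_measure (distr M SZ Z)" and "sigma_finite_measure (distr M SX X)"
    by unfold_locales
  show "sets (distr M SZ Z \<Otimes>\<^sub>M distr M SX X) = sets (distr M (SZ \<Otimes>\<^sub>M SX) (\<lambda>\<omega>. (Z \<omega>, X \<omega>)))"
    by (simp cong: sets_pair_measure_cong)
  fix A B assume "A \<in> sets (distr M SZ Z)" and "B \<in> sets (distr M SX X)"
  then have A: "A \<in> sets SZ" and B: "B \<in> sets SX" by simp_all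
  have "(\<lambda>\<omega>. (Z \<omega>, X \<omega>)) -` (A \<times> B) \<inter> space M = {\<omega> \<in> space M. X \<omega> \<in> B \<and> Z \<omega> \<in> A}"
    by auto
  then have "emeasure (distr M (SZ \<Otimes>\<^sub>M SX) (\<lambda>\<omega>. (Z \<omega>, X \<omega>))) (A \<times> B) =
      prob {\<omega> \<in> space M. X \<omega> \<in> B} * prob {\<omega> \<in> space M. Z \<omega> \<in> A}"
    using A B by (simp add: emeasure_distr emeasure_eq_measure indep ennreal_mult')
  then show "emeasure (distr M SZ Z) A * emeasure (distr M SX X) B =
      emeasure (distr M (SZ \<Otimes>\<^sub>M SX) (\<lambda>\<omega>. (Z \<omega>, X \<omega>))) (A \<times> B)"
    using A B by (simp add: emeasure_distr emeasure_eq_measure vimage_def Int_def conj_commute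
        ennreal_mult' mult.commute)
qed

lemma (in prob_space) prob_pair_eq_integral:
  assumes X[measurable]: "X \<in> measurable M SX" and Z[measurable]: "Z \<in> measurable M SZ"
    and indep: "\<And>A B. A \<in> sets SX \<Longrightarrow> B \<in> sets SZ \<Longrightarrow>
      prob {\<omega> \<in> space M. X \<omega> \<in> A \<and> Z \<omega> \<in> B} =
      prob {\<omega> \<in> space M. X \<omega> \<in> A} * prob {\<omega> \<in> space M. Z \<omega> \<in> B}"
    and S: "S \<in> sets (SZ \<Otimes>\<^sub>M SX)"
  shows "prob {\<omega> \<in> space M. (Z \<omega>, X \<omega>) \<in> S} =
    (\<integral>t. measure (distr M SX X) (Pair t -` S) \<partial>distr M SZ Z)"
proof -
  interpret PX: prob_space "distr M SX X" by (rule prob_space_distr) simp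
  have S': "S \<in> sets (distr M SZ Z \<Otimes>\<^sub>M distr M SX X)"
    using S by (simp cong: sets_pair_measure_cong)
  have "(\<lambda>\<omega>. (Z \<omega>, X \<omega>)) -` S \<inter> space M = {\<omega> \<in> space M. (Z \<omega>, X \<omega>) \<in> S}" by auto
  then have "emeasure M {\<omega> \<in> space M. (Z \<omega>, X \<omega>) \<in> S} =
      emeasure (distr M (SZ \<Otimes>\<^sub>M SX) (\<lambda>\<omega>. (Z \<omega>, X \<omega>))) S"
    using S by (simp add: emeasure_distr)
  also have "\<dots> = emeasure (distr M SZ Z \<Otimes>\<^sub>M distr M SX X) S"
    by (simp add: pair_measure_distr_eq_distr_pair[OF X Z indep])
  also have "\<dots> = (\<integral>\<^sup>+t. emeasure (distr M SX X) (Pair t -` S) \<partial>distr M SZ Z)"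
    by (rule PX.emeasure_pair_measure_alt[OF S'])
  also have "\<dots> = (\<integral>\<^sup>+t. ennreal (measure (distr M SX X) (Pair t -` S)) \<partial>distr M SZ Z)"
    by (simp add: PX.emeasure_eq_measure)
  finally have "prob {\<omega> \<in> space M. (Z \<omega>, X \<omega>) \<in> S} =
      enn2real (\<integral>\<^sup>+t. ennreal (measure (distr M SX X) (Pair t -` S)) \<partial>distr M SZ Z)"
    by (simp add: measure_def)
  moreover have "(\<lambda>t. measure (distr M SX X) (Pair t -` S)) \<in> borel_measurable (distr M SZ Z)"
    using PX.measurable_emeasure_Pair[OF S'] unfolding measure_def by measurable
  ultimately show ?thesis by (simp add: integral_eq_nn_integral)
qed

lemma (in prob_space) prob_all_add_le_eq_integral:
  fixes X :: "'a \<Rightarrow> real ^ 'k" and Z :: "'a \<Rightarrow> real" and y :: "'k \<Rightarrow> ereal"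
  assumes X[measurable]: "X \<in> borel_measurable M" and Z[measurable]: "Z \<in> borel_measurable M"
    and indep: "\<And>A B. A \<in> sets (borel :: (real ^ 'k) measure) \<Longrightarrow> B \<in> sets (borel :: real measure) \<Longrightarrow>
      prob {\<omega> \<in> space M. X \<omega> \<in> A \<and> Z \<omega> \<in> B} =
      prob {\<omega> \<in> space M. X \<omega> \<in> A} * prob {\<omega> \<in> space M. Z \<omega> \<in> B}"
  shows "prob {\<omega> \<in> space M. \<forall>i. ereal (X \<omega> $ i + Z \<omega>) \<le> y i} =
    (\<integral>t. prob {\<omega> \<in> space M. \<forall>i. ereal (X \<omega> $ i) \<le> y i - ereal t} \<partial>distr M borel Z)"
proof -
  define S where "S = {p :: real \<times> (real ^ 'k). \<forall>i. ereal (snd p $ i + fst p) \<le> y i}"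
  have "Measurable.pred (borel \<Otimes>\<^sub>M borel) (\<lambda>p :: real \<times> (real ^ 'k). \<forall>i. ereal (snd p $ i + fst p) \<le> y i)"
    by measurable
  then have S: "S \<in> sets (borel \<Otimes>\<^sub>M borel)"
    unfolding S_def by (simp add: pred_def space_pair_measure)
  have "prob {\<omega> \<in> space M. \<forall>i. ereal (X \<omega> $ i + Z \<omega>) \<le> y i} = prob {\<omega> \<in> space M. (Z \<omega>, X \<omega>) \<in> S}"
    by (simp add: S_def)
  also have "\<dots> = (\<integral>t. measure (distr M borel X) (Pair t -` S) \<partial>distr M borel Z)"
    by (rule prob_pair_eq_integral[OF X Z indep S])
  also have "\<dots> = (\<integral>t. prob {\<omega> \<in> space M. \<forall>i. ereal (X \<omega> $ i) \<le> y i - ereal t} \<partial>distr M borel Z)"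
  proof (rule Bochner_Integration.integral_cong[OF refl])
    fix t
    have "X -` (Pair t -` S) \<inter> space M = {\<omega> \<in> space M. \<forall>i. ereal (X \<omega> $ i) \<le> y i - ereal t}"
      by (auto simp: S_def ereal_le_minus_iff)
    moreover have "Pair t -` S \<in> sets borel" using S by (rule sets_Pair1)
    ultimately show "measure (distr M borel X) (Pair t -` S) =
        prob {\<omega> \<in> space M. \<forall>i. ereal (X \<omega> $ i) \<le> y i - ereal t}"
      by (simp add: measure_distr)
  qed
  finally show ?thesis .
qed

theorem mainTheorem7:
  fixes M :: "'a measure" and X :: "'a \<Rightarrow> real ^ 'k" and Z1 :: "'a \<Rightarrow> real"
    and C :: "real ^ 'k \<Rightarrow> real" and F Ft :: "'k \<Rightarrow> real \<Rightarrow> real" and G :: "real \<Rightarrow> real"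
  assumes "prob_space M"
    and "X \<in> borel_measurable M" and "Z1 \<in> borel_measurable M"
    and "\<And>A B. A \<in> sets (borel :: (real ^ 'k) measure) \<Longrightarrow> B \<in> sets (borel :: real measure) \<Longrightarrow>
        measure M {\<omega> \<in> space M. X \<omega> \<in> A \<and> Z1 \<omega> \<in> B} =
        measure M {\<omega> \<in> space M. X \<omega> \<in> A} * measure M {\<omega> \<in> space M. Z1 \<omega> \<in> B}"
    and "copula_of M X C"
    and "\<And>i x. F i x = measure M {\<omega> \<in> space M. X \<omega> $ i \<le> x}"
    and "\<And>x. G x = measure M {\<omega> \<in> space M. Z1 \<omega> \<le> x}"
    and "\<And>i x. Ft i x = measure M {\<omega> \<in> space M. X \<omega> $ i + Z1 \<omega> \<le> x}"
    and "\<And>i x. isCont (Ft i) x"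
  shows "copula_of M (\<lambda>\<omega>. X \<omega> + (\<chi> i. Z1 \<omega>))
           (\<lambda>u. \<integral>t. C (\<chi> i. cdf_ext (F i) (quantile (Ft i) (u $ i) - ereal t)) \<partial>(interval_measure G))"
proof -
  interpret prob_space M by fact
  note [measurable] = assms(2,3)
  let ?W = "\<lambda>\<omega>. X \<omega> + (\<chi> i. Z1 \<omega>)"
  have "?W \<in> borel_measurable M"
    by (intro borel_measurable_add borel_measurable_vec_lambda) measurable
  then have "copula_of M ?W (\<lambda>u. prob {\<omega> \<in> space M. \<forall>i. ereal (?W \<omega> $ i) \<le> quantile (Ft i) (u $ i)})"
    by (rule copula_of_continuous_marginals[OF assms(1)]) (simp_all add: assms(8,9))
  moreover have "prob {\<omega> \<in> space M. \<forall>i. ereal (?W \<omega> $ i) \<le> quantile (Ft i) (u $ i)} =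
      (\<integral>t. C (\<chi> i. cdf_ext (F i) (quantile (Ft i) (u $ i) - ereal t)) \<partial>(interval_measure G))" for u
  proof -
    let ?q = "\<lambda>i. quantile (Ft i) (u $ i)"
    have "prob {\<omega> \<in> space M. \<forall>i. ereal (?W \<omega> $ i) \<le> ?q i} =
        prob {\<omega> \<in> space M. \<forall>i. ereal (X \<omega> $ i + Z1 \<omega>) \<le> ?q i}"
      by simp
    also have "\<dots> = (\<integral>t. prob {\<omega> \<in> space M. \<forall>i. ereal (X \<omega> $ i) \<le> ?q i - ereal t} \<partial>distr M borel Z1)"
      by (rule prob_all_add_le_eq_integral[OF assms(2-4)])
    also have "\<dots> = (\<integral>t. C (\<chi> i. cdf_ext (F i) (?q i - ereal t)) \<partial>(interval_measure G))"
      by (simp add: copula_of_ereal[OF assms(1,2,5,6)] distr_eq_interval_measure[OF assms(3,7)])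
    finally show ?thesis .
  qed
  ultimately show ?thesis by simp
qed

end
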